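(* Let $A \subset \mathbb{Z}^d$ be a finite set whose convex hull is a $d$-dimensional simplex with vertices $v_1, \ldots, v_{d+1}$, where $v_{d+1} = 0$. For $v \in \mathbb{Z}^d$ write $\widetilde{v} = (v,1)$. Let $\mathcal{C}_A = \{\sum_{a \in A} n_a \widetilde{a} : n_a \in \mathbb{N}\}$ and $\Lambda = \mathrm{span}_{\mathbb{Z}}\{\widetilde{v}_1, \ldots, \widetilde{v}_{d+1}\}$. For each $i$, let $\mathcal{C}_i = \{\sum_{a \in A} n_a (a - v_i, 1) : n_a \in \mathbb{N}\}$ and $\Lambda_i = \mathrm{span}_{\mathbb{Z}}\{(v_j - v_i, 1) : 1 \leq j \leq d+1\}$. Fix $\pi \in \mathbb{Z}^{d+1}$, let $\mathcal{S}_\pi$ be the set of points of $\mathcal{C}_A$ congruent to $\pi$ modulo $\Lambda$, and for each $i$ and $\rho \in \mathbb{Z}^{d+1}$ let $\mathcal{S}_{\rho,i}$ be the set of points of $\mathcal{C}_i$ congruent to $\rho$ modulo $\Lambda_i$. A point $(g,H) \in \mathcal{S}_\pi$ is a minimal element of $\mathcal{S}_\pi$ if $(g,H) - \widetilde{v}_j \notin \mathcal{C}_A$ for all $j$; a point $(g,H) \in \mathcal{S}_{\rho,i}$ is a minimal element of $\mathcal{S}_{\rho,i}$ if $(g,H) - (v_j - v_i, 1) \notin \mathcal{C}_i$ for all $j$. Suppose the minimal elements of $\mathcal{S}_\pi$ are $(g_1,H_1), \ldots, (g_n,H_n)$. Then for any $1 \leq i \leq d$, the set $\mathcal{S}_{\pi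 - \widetilde{v}_i, i}$ has exactly $n$ minimal elements, and they can be enumerated as $(g^1, H^1), \ldots, (g^n, H^n)$ with \[ g^j = g_j - H_j v_i \quad \text{and} \quad H^j = H_j \qquad \text{for all } j \leq n. \]
   Context: $\mathbb{N} = \{0,1,2,\ldots\}$; points of $\mathbb{Z}^{d+1}$ are written $(g,H)$ with $g \in \mathbb{Z}^d$, $H \in \mathbb{Z}$. *)

theory Defs
  imports "HOL-Analysis.Analysis"
begin

text \<open>Points of Z^(d+1) are pairs (g,H) :: int^'d \<times> int; the dimension d is CARD('d).\<close>

definition rvec :: "int ^ 'n \<Rightarrow> real ^ 'n" where
  "rvec x = (\<chi> k. real_of_int (x $ k))"

text \<open>The semigroup generated by the lifted points (a - w, 1), a \<in> A (w = 0 gives C_A,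
  w = v_i gives C_i).\<close>
definition cone_at :: "(int ^ 'n) set \<Rightarrow> int ^ 'n \<Rightarrow> ((int ^ 'n) \<times> int) set" where
  "cone_at A w = {((\<Sum>a\<in>A. int (c a) *s (a - w)), (\<Sum>a\<in>A. int (c a))) | c :: int ^ 'n \<Rightarrow> nat. True}"

definition lat :: "(nat \<Rightarrow> int ^ 'n) \<Rightarrow> nat set \<Rightarrow> int ^ 'n \<Rightarrow> ((int ^ 'n) \<times> int) set" where
  "lat v I w = {((\<Sum>j\<in>I. c j *s (v j - w)), (\<Sum>j\<in>I. c j)) | c :: nat \<Rightarrow> int. True}"

definition cong_set :: "((int ^ 'n) \<times> int) set \<Rightarrow> ((int ^ 'n) \<times> int) set \<Rightarrow> (int ^ 'n) \<times> int
    \<Rightarrow> ((int ^ 'n) \<times> int) set" where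
  "cong_set C L \<rho> = {p \<in> C. p - \<rho> \<in> L}"

definition minimal_elems :: "((int ^ 'n) \<times> int) set \<Rightarrow> ((int ^ 'n) \<times> int) set
    \<Rightarrow> (nat \<Rightarrow> int ^ 'n) \<Rightarrow> nat set \<Rightarrow> int ^ 'n \<Rightarrow> ((int ^ 'n) \<times> int) set" where
  "minimal_elems S C v I w = {p \<in> S. \<forall>j\<in>I. p - (v j - w, 1) \<notin> C}"

end

theory Submission
  imports Defs
begin

(* The shear (g, H) |-> (g + H v_i, H) is an automorphism of the group Z^(d+1) sending (a - v_i, 1)
   to (a, 1). Hence it maps C_i onto C_A, Lambda_i onto Lambda and each generator (v_j - v_i, 1) to
   (v_j, 1), so it carries the minimal elements of S_(rho,i) bijectively onto those of S_sigma, with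
   sigma the image of rho. For rho = pi - (v_i, 1) that image is pi + ((H - 2) v_i, -1), which is
   congruent to pi modulo Lambda because (v_i, 1) and (v_(d+1), 1) = (0, 1) both lie in Lambda. The
   map of the statement is the inverse shear. Only v_(d+1) = 0 is used from the simplex hypotheses. *)

definition shear :: "int ^ 'n \<Rightarrow> (int ^ 'n) \<times> int \<Rightarrow> (int ^ 'n) \<times> int" where
  "shear w p = (fst p + snd p *s w, snd p)"

lemma shear_diff: "shear w (p - q) = shear w p - shear w q"
  by (simp add: shear_def vec_eq_iff algebra_simps)

lemma shear_uminus_shear [simp]: "shear (- w) (shear w p) = p"
  by (simp add: shear_def vec_eq_iff)

lemma shear_shear_uminus [simp]: "shear w (shear (- w) p) = p"
  by (simp add: shear_def vec_eq_iff)

lemma inj_shear: "inj (shear w)"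
  by (metis injI shear_uminus_shear)

lemma surj_shear: "surj (shear w)"
  by (metis surjI shear_shear_uminus)

lemma shear_lifted_sum:
  fixes c :: "'a \<Rightarrow> int"
  shows "shear w ((\<Sum>a\<in>S. c a *s (f a - w)), (\<Sum>a\<in>S. c a)) = ((\<Sum>a\<in>S. c a *s f a), (\<Sum>a\<in>S. c a))"
  by (simp add: shear_def vec_eq_iff sum_distrib_left sum_distrib_right sum_subtractf algebra_simps)

lemma shear_cone_at: "shear w ` cone_at A w = cone_at A 0"
proof -
  have "cone_at A u = (\<lambda>c. ((\<Sum>a\<in>A. int (c a) *s (a - u)), (\<Sum>a\<in>A. int (c a)))) ` UNIV" for u
    unfolding cone_at_def by auto
  then show ?thesis
    by (simp only: image_image shear_lifted_sum diff_zero)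
qed

lemma shear_lat: "shear w ` lat v I w = lat v I 0"
proof -
  have "lat v I u = (\<lambda>c. ((\<Sum>j\<in>I. c j *s (v j - u)), (\<Sum>j\<in>I. c j))) ` UNIV" for u
    unfolding lat_def by auto
  then show ?thesis
    by (simp only: image_image shear_lifted_sum diff_zero)
qed

lemma lat_add: "x \<in> lat v I w \<Longrightarrow> y \<in> lat v I w \<Longrightarrow> x + y \<in> lat v I w"
proof -
  assume "x \<in> lat v I w" "y \<in> lat v I w"
  then obtain c d where x: "x = ((\<Sum>j\<in>I. c j *s (v j - w)), (\<Sum>j\<in>I. c j))"
    and y: "y = ((\<Sum>j\<in>I. d j *s (v j - w)), (\<Sum>j\<in>I. d j))"
    unfolding lat_def by blast
  have "x + y = ((\<Sum>j\<in>I. (c j + d j) *s (v j - w)), (\<Sum>j\<in>I. c j + d j))"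
    by (simp add: x y vec_eq_iff sum.distrib[symmetric] algebra_simps)
  then show ?thesis
    unfolding lat_def by (intro CollectI exI[of _ "\<lambda>j. c j + d j"]) simp
qed

lemma lat_uminus: "x \<in> lat v I w \<Longrightarrow> - x \<in> lat v I w"
proof -
  assume "x \<in> lat v I w"
  then obtain c where x: "x = ((\<Sum>j\<in>I. c j *s (v j - w)), (\<Sum>j\<in>I. c j))"
    unfolding lat_def by blast
  have "- x = ((\<Sum>j\<in>I. (- c j) *s (v j - w)), (\<Sum>j\<in>I. - c j))"
    by (simp add: x vec_eq_iff sum_negf[symmetric] algebra_simps)
  then show ?thesis
    unfolding lat_def by (intro CollectI exI[of _ "\<lambda>j. - c j"]) simp
qed

lemma lat_two_generators:
  fixes v :: "nat \<Rightarrow> int ^ 'n"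
  assumes "finite I" "i \<in> I" "j \<in> I" "i \<noteq> j"
  shows "(a *s (v i - w) + b *s (v j - w), a + b) \<in> lat v I w"
proof -
  define c where "c k = (if k = i then a else 0) + (if k = j then b else 0)" for k
  have "c k *s x = (if k = i then a *s x else 0) + (if k = j then b *s x else 0)"
    for k and x :: "int ^ 'n"
    by (simp add: c_def)
  then have "(\<Sum>k\<in>I. c k *s (v k - w))
      = (\<Sum>k\<in>I. (if k = i then a *s (v k - w) else 0) + (if k = j then b *s (v k - w) else 0))"
    by (simp only:)
  also have "\<dots> = a *s (v i - w) + b *s (v j - w)"
    using assms by (simp only: sum.distrib sum.delta if_True)
  finally have "(\<Sum>k\<in>I. c k *s (v k - w)) = a *s (v i - w) + b *s (v j - w)" .
  moreover have "(\<Sum>k\<in>I. c k) = a + b"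
    using assms by (simp add: c_def sum.distrib)
  ultimately show ?thesis
    unfolding lat_def by (intro CollectI exI[of _ c]) simp
qed

lemma cong_set_eq:
  assumes "\<rho> - \<sigma> \<in> lat v I w"
  shows "cong_set C (lat v I w) \<rho> = cong_set C (lat v I w) \<sigma>"
proof -
  have "p - \<rho> \<in> lat v I w \<longleftrightarrow> p - \<sigma> \<in> lat v I w" for p
    using lat_add[OF _ assms, of "p - \<rho>"] lat_add[OF _ lat_uminus[OF assms], of "p - \<sigma>"]
    by (auto simp: algebra_simps)
  then show ?thesis
    by (simp add: cong_set_def)
qed

lemma shear_minimal_elems:
  "shear w ` minimal_elems (cong_set (cone_at A w) (lat v I w) \<rho>) (cone_at A w) v I w
    = minimal_elems (cong_set (cone_at A 0) (lat v I 0) (shear w \<rho>)) (cone_at A 0) v I 0"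
proof -
  have cone: "p \<in> cone_at A w \<longleftrightarrow> shear w p \<in> cone_at A 0" for p
    by (metis shear_cone_at inj_shear inj_image_mem_iff)
  have lat: "p \<in> lat v I w \<longleftrightarrow> shear w p \<in> lat v I 0" for p
    by (metis shear_lat inj_shear inj_image_mem_iff)
  have generator: "shear w (v j - w, 1) = (v j - 0, 1)" for j
    by (simp add: shear_def)
  have "minimal_elems (cong_set (cone_at A w) (lat v I w) \<rho>) (cone_at A w) v I w
      = shear w -` minimal_elems (cong_set (cone_at A 0) (lat v I 0) (shear w \<rho>)) (cone_at A 0) v I 0"
  proof -
    have "q \<in> minimal_elems (cong_set (cone_at A w) (lat v I w) \<rho>) (cone_at A w) v I w \<longleftrightarrow>
      shear w q \<in> minimal_elems (cong_set (cone_at A 0) (lat v I 0) (shear w \<rho>)) (cone_at A 0) v I 0"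
      for q
      unfolding minimal_elems_def cong_set_def
      by (simp add: cone lat shear_diff generator del: diff_zero)
    then show ?thesis
      by blast
  qed
  then show ?thesis
    by (simp add: surj_image_vimage_eq surj_shear)
qed

theorem lemma4p2:
  fixes A :: "(int ^ 'd) set"
    and v :: "nat \<Rightarrow> int ^ 'd"
    and \<pi> :: "(int ^ 'd) \<times> int"
    and gH :: "nat \<Rightarrow> (int ^ 'd) \<times> int"
    and n i :: nat
  assumes finA: "finite A"
    and vinj: "inj_on v {1..CARD('d) + 1}"
    and vindep: "\<not> affine_dependent (rvec ` v ` {1..CARD('d) + 1})"
    and hull: "convex hull (rvec ` A) = convex hull (rvec ` v ` {1..CARD('d) + 1})"
    and vlast: "v (CARD('d) + 1) = 0"
    and enum: "bij_betw gH {1..n}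
      (minimal_elems (cong_set (cone_at A 0) (lat v {1..CARD('d) + 1} 0) \<pi>)
         (cone_at A 0) v {1..CARD('d) + 1} 0)"
    and i: "1 \<le> i" "i \<le> CARD('d)"
  shows "bij_betw (\<lambda>k. (fst (gH k) - snd (gH k) *s v i, snd (gH k))) {1..n}
      (minimal_elems (cong_set (cone_at A (v i)) (lat v {1..CARD('d) + 1} (v i)) (\<pi> - (v i, 1)))
         (cone_at A (v i)) v {1..CARD('d) + 1} (v i))"
proof -
  let ?I = "{1..CARD('d) + 1}"
  let ?M = "minimal_elems (cong_set (cone_at A 0) (lat v ?I 0) \<pi>) (cone_at A 0) v ?I 0"
  let ?M' = "minimal_elems (cong_set (cone_at A (v i)) (lat v ?I (v i)) (\<pi> - (v i, 1)))
    (cone_at A (v i)) v ?I (v i)"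
  have "shear (v i) (\<pi> - (v i, 1)) - \<pi>
      = ((snd \<pi> - 2) *s (v i - 0) + (1 - snd \<pi>) *s (v (CARD('d) + 1) - 0), (snd \<pi> - 2) + (1 - snd \<pi>))"
    unfolding vlast by (cases \<pi>) (simp add: shear_def vec_eq_iff algebra_simps)
  also have "\<dots> \<in> lat v ?I 0"
    using i by (intro lat_two_generators) auto
  finally have sheared: "shear (v i) ` ?M' = ?M"
    by (simp only: shear_minimal_elems cong_set_eq)
  have "shear (- v i) ` ?M = ?M'"
    unfolding sheared[symmetric] image_image shear_uminus_shear by simp
  then have "bij_betw (shear (- v i)) ?M ?M'"
    by (intro bij_betw_imageI inj_on_subset[OF inj_shear subset_UNIV])
  moreover have "(\<lambda>k. (fst (gH k) - snd (gH k) *s v i, snd (gH k))) = shear (- v i) \<circ> gH"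
    by (simp add: fun_eq_iff shear_def)
  ultimately show ?thesis
    using bij_betw_trans[OF enum] by simp
qed

end
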